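(* Let $\Bbbk$ be a field of characteristic $\neq 2$ and let $L$ be a Lie algebra over $\Bbbk$. Let $U_\perp(L)$ be the universal enveloping Lie tri-algebra of $L$ with respect to the functor that sends a Lie tri-algebra $(A,[\cdot\vdash\cdot],[\cdot\dashv\cdot],[\cdot\perp\cdot])$ to the Lie algebra $(A,[\cdot\perp\cdot])$. Let $\dot L$ be an isomorphic copy of $L$ and $\dot L*L$ the free product of Lie algebras. Then $U_\perp(L)$ is isomorphic, as a linear space, to the ideal of $\dot L*L$ generated by $\dot L$.
   Context: A Lie tri-algebra is a vector space with three bilinear operations $[\cdot\vdash\cdot]$, $[\cdot\dashv\cdot]$, $[\cdot\perp\cdot]$ such that $[a\dashv b]=-[b\vdash a]$, $[a\perp b]=-[b\perp a]$, and for all $x_1,x_2,x_3$: $[[x_1\vdash x_2]\vdash x_3]-[x_1\vdash[x_2\vdash x_3]]+[x_2\vdash[x_1\vdash x_3]]=0$; $[[x_1\perp x_2]\vdash x_3]=[[x_1\vdash x_2]\vdash x_3]$; $[[x_1\vdash x_2]\perp x_3]-[x_1\vdash[x_2\perp x_3]]-[[x_1\vdash x_3]\perp x_2]=0$; $[[x_1\perp x_2]\perp x_3]+[[x_2\perp x_3]\perp x_1]+[[x_3\perp x_1]\perp x_2]=0$. The universal enveloping Lie tri-algebra $U_\perp(L)$ is a Lie tri-algebra together with a Lie algebra homomorphism $L\to(U_\perp(L),[\cdot\perp\cdot])$ through which every Lie algebra homomorphism from $L$ to $(A,[\cdot\perp\cdot])$, $A$ a Lie tri-algebra, factors uniquely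 via a Lie tri-algebra homomorphism. *)

theory Defs
  imports Main "HOL.Vector_Spaces" "HOL-Library.Function_Algebras"
begin

text \<open>All vector spaces over the field 'k are represented as subspaces (carriers)
of an ambient abelian group type equipped with a scalar multiplication that makes
the ambient type a 'k-vector space (HOL's vector_space locale).\<close>

definition lin_on :: "('k::field \<Rightarrow> 'a::ab_group_add \<Rightarrow> 'a) \<Rightarrow> ('k \<Rightarrow> 'b::ab_group_add \<Rightarrow> 'b)
    \<Rightarrow> 'a set \<Rightarrow> ('a \<Rightarrow> 'b) \<Rightarrow> bool" where
  "lin_on s1 s2 V f \<longleftrightarrow>
     (\<forall>x\<in>V. \<forall>y\<in>V. f (x + y) = f x + f y) \<and> (\<forall>c. \<forall>x\<in>V. f (s1 c x) = s2 c (f x))"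

definition bilinear_on :: "('k::field \<Rightarrow> 'a::ab_group_add \<Rightarrow> 'a) \<Rightarrow> 'a set \<Rightarrow> ('a \<Rightarrow> 'a \<Rightarrow> 'a) \<Rightarrow> bool" where
  "bilinear_on s V b \<longleftrightarrow>
     (\<forall>x\<in>V. \<forall>y\<in>V. \<forall>z\<in>V. b (x + y) z = b x z + b y z \<and> b x (y + z) = b x y + b x z) \<and>
     (\<forall>c. \<forall>x\<in>V. \<forall>y\<in>V. b (s c x) y = s c (b x y) \<and> b x (s c y) = s c (b x y))"

definition closed_on :: "'a set \<Rightarrow> ('a \<Rightarrow> 'a \<Rightarrow> 'a) \<Rightarrow> bool" where
  "closed_on V b \<longleftrightarrow> (\<forall>x\<in>V. \<forall>y\<in>V. b x y \<in> V)"

definition lie_alg :: "('k::field \<Rightarrow> 'a::ab_group_add \<Rightarrow> 'a) \<Rightarrow> 'a set \<Rightarrow> ('a \<Rightarrow> 'a \<Rightarrow> 'a) \<Rightarrow> bool" where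
  "lie_alg s V b \<longleftrightarrow> vector_space s \<and> module.subspace s V \<and> closed_on V b \<and> bilinear_on s V b \<and>
     (\<forall>x\<in>V. b x x = 0) \<and>
     (\<forall>x\<in>V. \<forall>y\<in>V. \<forall>z\<in>V. b x (b y z) + b y (b z x) + b z (b x y) = 0)"

definition lie_tri :: "('k::field \<Rightarrow> 'a::ab_group_add \<Rightarrow> 'a) \<Rightarrow> 'a set \<Rightarrow>
    ('a \<Rightarrow> 'a \<Rightarrow> 'a) \<Rightarrow> ('a \<Rightarrow> 'a \<Rightarrow> 'a) \<Rightarrow> ('a \<Rightarrow> 'a \<Rightarrow> 'a) \<Rightarrow> bool" where
  "lie_tri s A l r p \<longleftrightarrow> vector_space s \<and> module.subspace s A \<and>
     closed_on A l \<and> closed_on A r \<and> closed_on A p \<and>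
     bilinear_on s A l \<and> bilinear_on s A r \<and> bilinear_on s A p \<and>
     (\<forall>a\<in>A. \<forall>b\<in>A. r a b = - l b a) \<and>
     (\<forall>a\<in>A. \<forall>b\<in>A. p a b = - p b a) \<and>
     (\<forall>x1\<in>A. \<forall>x2\<in>A. \<forall>x3\<in>A.
        l (l x1 x2) x3 - l x1 (l x2 x3) + l x2 (l x1 x3) = 0 \<and>
        l (p x1 x2) x3 = l (l x1 x2) x3 \<and>
        p (l x1 x2) x3 - l x1 (p x2 x3) - p (l x1 x3) x2 = 0 \<and>
        p (p x1 x2) x3 + p (p x2 x3) x1 + p (p x3 x1) x2 = 0)"

definition lie_hom :: "('k::field \<Rightarrow> 'a::ab_group_add \<Rightarrow> 'a) \<Rightarrow> 'a set \<Rightarrow> ('a \<Rightarrow> 'a \<Rightarrow> 'a) \<Rightarrow>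
    ('k \<Rightarrow> 'b::ab_group_add \<Rightarrow> 'b) \<Rightarrow> 'b set \<Rightarrow> ('b \<Rightarrow> 'b \<Rightarrow> 'b) \<Rightarrow> ('a \<Rightarrow> 'b) \<Rightarrow> bool" where
  "lie_hom s1 V1 b1 s2 V2 b2 f \<longleftrightarrow> (\<forall>x\<in>V1. f x \<in> V2) \<and> lin_on s1 s2 V1 f \<and>
     (\<forall>x\<in>V1. \<forall>y\<in>V1. f (b1 x y) = b2 (f x) (f y))"

definition tri_hom :: "('k::field \<Rightarrow> 'a::ab_group_add \<Rightarrow> 'a) \<Rightarrow> 'a set \<Rightarrow>
    ('a \<Rightarrow> 'a \<Rightarrow> 'a) \<Rightarrow> ('a \<Rightarrow> 'a \<Rightarrow> 'a) \<Rightarrow> ('a \<Rightarrow> 'a \<Rightarrow> 'a) \<Rightarrow>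
    ('k \<Rightarrow> 'b::ab_group_add \<Rightarrow> 'b) \<Rightarrow> 'b set \<Rightarrow>
    ('b \<Rightarrow> 'b \<Rightarrow> 'b) \<Rightarrow> ('b \<Rightarrow> 'b \<Rightarrow> 'b) \<Rightarrow> ('b \<Rightarrow> 'b \<Rightarrow> 'b) \<Rightarrow> ('a \<Rightarrow> 'b) \<Rightarrow> bool" where
  "tri_hom s1 A l r p s2 B l' r' p' f \<longleftrightarrow> (\<forall>x\<in>A. f x \<in> B) \<and> lin_on s1 s2 A f \<and>
     (\<forall>x\<in>A. \<forall>y\<in>A. f (l x y) = l' (f x) (f y) \<and> f (r x y) = r' (f x) (f y) \<and>
                   f (p x y) = p' (f x) (f y))"

text \<open>A type of labelled binary trees, used only to name a target type large enough
to contain (a copy of) every Lie (tri-)algebra generated by the image of L.\<close>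
datatype 'x btree = Leaf 'x | Node nat "'x btree" "'x btree"

type_synonym ('l, 'k) big = "('l + 'l) btree \<Rightarrow> 'k"

definition tri_univ_into :: "('k::field \<Rightarrow> 'l::ab_group_add \<Rightarrow> 'l) \<Rightarrow> 'l set \<Rightarrow> ('l \<Rightarrow> 'l \<Rightarrow> 'l) \<Rightarrow>
    ('k \<Rightarrow> 'u::ab_group_add \<Rightarrow> 'u) \<Rightarrow> 'u set \<Rightarrow>
    ('u \<Rightarrow> 'u \<Rightarrow> 'u) \<Rightarrow> ('u \<Rightarrow> 'u \<Rightarrow> 'u) \<Rightarrow> ('u \<Rightarrow> 'u \<Rightarrow> 'u) \<Rightarrow> ('l \<Rightarrow> 'u) \<Rightarrow>
    ('k \<Rightarrow> 'c::ab_group_add \<Rightarrow> 'c) \<Rightarrow> bool" where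
  "tri_univ_into sL L bL sU U l r p i sA \<longleftrightarrow>
     (\<forall>A l' r' p' f. lie_tri sA A l' r' p' \<and> lie_hom sL L bL sA A p' f \<longrightarrow>
        (\<exists>g. tri_hom sU U l r p sA A l' r' p' g \<and> (\<forall>x\<in>L. g (i x) = f x)) \<and>
        (\<forall>g h. tri_hom sU U l r p sA A l' r' p' g \<and> (\<forall>x\<in>L. g (i x) = f x) \<and>
               tri_hom sU U l r p sA A l' r' p' h \<and> (\<forall>x\<in>L. h (i x) = f x) \<longrightarrow>
               (\<forall>u\<in>U. g u = h u)))"

text \<open>Universality is required for targets living in U's own ambient
type and in the large type ('l,'k) big; this is equivalent to universality with
respect to all Lie tri-algebras.\<close>
definition is_univ_env_tri :: "('k::field \<Rightarrow> 'l::ab_group_add \<Rightarrow> 'l) \<Rightarrow> 'l set \<Rightarrow> ('l \<Rightarrow> 'l \<Rightarrow> 'l) \<Rightarrow>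
    ('k \<Rightarrow> 'u::ab_group_add \<Rightarrow> 'u) \<Rightarrow> 'u set \<Rightarrow>
    ('u \<Rightarrow> 'u \<Rightarrow> 'u) \<Rightarrow> ('u \<Rightarrow> 'u \<Rightarrow> 'u) \<Rightarrow> ('u \<Rightarrow> 'u \<Rightarrow> 'u) \<Rightarrow> ('l \<Rightarrow> 'u) \<Rightarrow> bool" where
  "is_univ_env_tri sL L bL sU U l r p i \<longleftrightarrow>
     lie_alg sL L bL \<and> lie_tri sU U l r p \<and> lie_hom sL L bL sU U p i \<and>
     (\<forall>sA :: 'k \<Rightarrow> 'u \<Rightarrow> 'u. tri_univ_into sL L bL sU U l r p i sA) \<and>
     (\<forall>sA :: 'k \<Rightarrow> ('l, 'k) big \<Rightarrow> ('l, 'k) big. tri_univ_into sL L bL sU U l r p i sA)"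

definition coprod_into :: "('k::field \<Rightarrow> 'l::ab_group_add \<Rightarrow> 'l) \<Rightarrow> 'l set \<Rightarrow> ('l \<Rightarrow> 'l \<Rightarrow> 'l) \<Rightarrow>
    ('k \<Rightarrow> 'f::ab_group_add \<Rightarrow> 'f) \<Rightarrow> 'f set \<Rightarrow> ('f \<Rightarrow> 'f \<Rightarrow> 'f) \<Rightarrow> ('l \<Rightarrow> 'f) \<Rightarrow> ('l \<Rightarrow> 'f) \<Rightarrow>
    ('k \<Rightarrow> 'c::ab_group_add \<Rightarrow> 'c) \<Rightarrow> bool" where
  "coprod_into sL L bL sF F bF j1 j2 sM \<longleftrightarrow>
     (\<forall>M bM g1 g2. lie_alg sM M bM \<and> lie_hom sL L bL sM M bM g1 \<and> lie_hom sL L bL sM M bM g2 \<longrightarrow>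
        (\<exists>h. lie_hom sF F bF sM M bM h \<and> (\<forall>x\<in>L. h (j1 x) = g1 x \<and> h (j2 x) = g2 x)) \<and>
        (\<forall>h h'. lie_hom sF F bF sM M bM h \<and> (\<forall>x\<in>L. h (j1 x) = g1 x \<and> h (j2 x) = g2 x) \<and>
                lie_hom sF F bF sM M bM h' \<and> (\<forall>x\<in>L. h' (j1 x) = g1 x \<and> h' (j2 x) = g2 x) \<longrightarrow>
                (\<forall>u\<in>F. h u = h' u)))"

text \<open>(F, bF) with j1 : L-dot -> F (L-dot an isomorphic copy of L, identified with L)
and j2 : L -> F is the free product L-dot * L of Lie algebras.\<close>
definition is_free_product :: "('k::field \<Rightarrow> 'l::ab_group_add \<Rightarrow> 'l) \<Rightarrow> 'l set \<Rightarrow> ('l \<Rightarrow> 'l \<Rightarrow> 'l) \<Rightarrow>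
    ('k \<Rightarrow> 'f::ab_group_add \<Rightarrow> 'f) \<Rightarrow> 'f set \<Rightarrow> ('f \<Rightarrow> 'f \<Rightarrow> 'f) \<Rightarrow> ('l \<Rightarrow> 'f) \<Rightarrow> ('l \<Rightarrow> 'f) \<Rightarrow> bool" where
  "is_free_product sL L bL sF F bF j1 j2 \<longleftrightarrow>
     lie_alg sL L bL \<and> lie_alg sF F bF \<and> lie_hom sL L bL sF F bF j1 \<and> lie_hom sL L bL sF F bF j2 \<and>
     (\<forall>sM :: 'k \<Rightarrow> 'f \<Rightarrow> 'f. coprod_into sL L bL sF F bF j1 j2 sM) \<and>
     (\<forall>sM :: 'k \<Rightarrow> ('l, 'k) big \<Rightarrow> ('l, 'k) big. coprod_into sL L bL sF F bF j1 j2 sM)"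

definition lie_ideal_gen :: "('k::field \<Rightarrow> 'f::ab_group_add \<Rightarrow> 'f) \<Rightarrow> 'f set \<Rightarrow> ('f \<Rightarrow> 'f \<Rightarrow> 'f) \<Rightarrow> 'f set \<Rightarrow> 'f set" where
  "lie_ideal_gen sF F bF X =
     \<Inter>{I. module.subspace sF I \<and> I \<subseteq> F \<and> X \<subseteq> I \<and> (\<forall>x\<in>F. \<forall>y\<in>I. bF x y \<in> I)}"

end

theory Submission
  imports Defs "HOL-Library.Product_Plus"
begin

text \<open>
  Let \<open>collapse\<close> be the endomorphism of the free product \<open>F = L\<^sub>\<bullet> * L\<close> sending both copies
  of \<open>L\<close> onto the second one, and \<open>I\<close> the ideal generated by \<open>L\<^sub>\<bullet>\<close>. With
  \<open>[x \<turnstile> y] = [collapse x, y]\<close> and \<open>[x \<bottom> y] = [x, y]\<close>, \<open>I\<close> is a Lie tri-algebra, so the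
  universal property yields a tri-algebra map \<open>to_ideal : U \<rightarrow> I\<close> with \<open>i x \<mapsto> x\<^sub>\<bullet>\<close>.
  Its image is an ideal containing \<open>L\<^sub>\<bullet>\<close>, so it is onto.

  For injectivity, \<open>(U, \<bottom>)\<close> is a Lie algebra (here the characteristic is used) on which
  \<open>L\<close> acts by the derivations \<open>[i b \<turnstile> -]\<close>; the free product property gives a Lie map
  \<open>to_sdp\<close> from \<open>F\<close> to the semidirect product \<open>U \<rtimes> L\<close> with \<open>x\<^sub>\<bullet> \<mapsto> (i x, 0)\<close> and
  \<open>x \<mapsto> (0, x)\<close>. The first component of \<open>to_sdp \<circ> to_ideal\<close> is a tri-algebra endomorphism of
  \<open>U\<close> fixing \<open>i\<close>, hence the identity.
\<close>

section \<open>Lie algebras as bracketed subspaces\<close>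

locale carrier_space = vector_space s for s :: "'k::field \<Rightarrow> 'a::ab_group_add \<Rightarrow> 'a" +
  fixes V assumes subspace_carrier: "subspace V"
begin

lemma zero_in_carrier [simp, intro]: "0 \<in> V"
  using subspace_carrier by (simp add: subspace_def)

lemma add_in_carrier [simp, intro]: "x \<in> V \<Longrightarrow> y \<in> V \<Longrightarrow> x + y \<in> V"
  using subspace_carrier by (simp add: subspace_def)

lemma scale_in_carrier [simp, intro]: "x \<in> V \<Longrightarrow> s c x \<in> V"
  using subspace_carrier by (simp add: subspace_def)

lemma minus_in_carrier [simp, intro]: "x \<in> V \<Longrightarrow> - x \<in> V"
  using subspace_carrier by (simp add: subspace_neg)

lemma diff_in_carrier [simp, intro]: "x \<in> V \<Longrightarrow> y \<in> V \<Longrightarrow> x - y \<in> V"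
  using subspace_carrier by (simp add: subspace_diff)

end

locale bracket_space = carrier_space s V for s :: "'k::field \<Rightarrow> 'a::ab_group_add \<Rightarrow> 'a" and V +
  fixes b assumes bilinear: "bilinear_on s V b" and closed: "closed_on V b"
begin

lemma bracket_in_carrier [simp, intro]: "x \<in> V \<Longrightarrow> y \<in> V \<Longrightarrow> b x y \<in> V"
  using closed by (simp add: closed_on_def)

lemma bracket_add_left [simp]: "x \<in> V \<Longrightarrow> y \<in> V \<Longrightarrow> z \<in> V \<Longrightarrow> b (x + y) z = b x z + b y z"
  using bilinear by (simp add: bilinear_on_def)

lemma bracket_add_right [simp]: "x \<in> V \<Longrightarrow> y \<in> V \<Longrightarrow> z \<in> V \<Longrightarrow> b x (y + z) = b x y + b x z"
  using bilinear by (simp add: bilinear_on_def)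

lemma bracket_scale_left [simp]: "x \<in> V \<Longrightarrow> y \<in> V \<Longrightarrow> b (s c x) y = s c (b x y)"
  using bilinear by (simp add: bilinear_on_def)

lemma bracket_scale_right [simp]: "x \<in> V \<Longrightarrow> y \<in> V \<Longrightarrow> b x (s c y) = s c (b x y)"
  using bilinear by (simp add: bilinear_on_def)

lemma bracket_zero_left [simp]: "x \<in> V \<Longrightarrow> b 0 x = 0"
  using bracket_add_left[of 0 0 x] by simp

lemma bracket_zero_right [simp]: "x \<in> V \<Longrightarrow> b x 0 = 0"
  using bracket_add_right[of x 0 0] by simp

lemma bracket_minus_left [simp]: "x \<in> V \<Longrightarrow> y \<in> V \<Longrightarrow> b (- x) y = - b x y"
  using bracket_add_left[of "- x" x y] by (simp add: eq_neg_iff_add_eq_0)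

lemma bracket_minus_right [simp]: "x \<in> V \<Longrightarrow> y \<in> V \<Longrightarrow> b x (- y) = - b x y"
  using bracket_add_right[of x "- y" y] by (simp add: eq_neg_iff_add_eq_0)

lemma bracket_diff_left [simp]: "x \<in> V \<Longrightarrow> y \<in> V \<Longrightarrow> z \<in> V \<Longrightarrow> b (x - y) z = b x z - b y z"
  using bracket_add_left[of x "- y" z] by (simp del: bracket_add_left)

lemma bracket_diff_right [simp]: "x \<in> V \<Longrightarrow> y \<in> V \<Longrightarrow> z \<in> V \<Longrightarrow> b x (y - z) = b x y - b x z"
  using bracket_add_right[of x y "- z"] by (simp del: bracket_add_right)

lemma bracket_span_closed:
  assumes G: "G \<subseteq> V" and gen: "\<And>x y. x \<in> G \<Longrightarrow> y \<in> G \<Longrightarrow> b x y \<in> span G"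
    and x: "x \<in> span G" and y: "y \<in> span G"
  shows "b x y \<in> span G"
proof -
  have span_V: "span G \<subseteq> V" using span_minimal[OF G subspace_carrier] .
  have right: "b x y \<in> span G" if x: "x \<in> G" and y: "y \<in> span G" for x y
  proof -
    from y have "y \<in> span G \<and> b x y \<in> span G"
    proof (induction rule: span_induct_alt)
      case (step c z w)
      moreover have "x \<in> V" "z \<in> V" "w \<in> V" using step G span_V x by auto
      then have "b x (s c z + w) = s c (b x z) + b x w" by simp
      ultimately show ?case using x by (auto intro!: span_add span_scale gen intro: span_base)
    qed (use x G in \<open>auto simp: span_zero\<close>)
    then show ?thesis by simp
  qed
  from x have "x \<in> span G \<and> b x y \<in> span G"
  proof (induction rule: span_induct_alt)
    case (step c z w)
    moreover have "y \<in> V" "z \<in> V" "w \<in> V" using step G span_V y by auto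
    then have "b (s c z + w) y = s c (b z y) + b w y" by simp
    ultimately show ?case using y by (auto intro!: span_add span_scale right intro: span_base)
  qed (use y span_V in \<open>auto simp: span_zero\<close>)
  then show ?thesis by simp
qed

end

locale lie_algebra = bracket_space s V b for s :: "'k::field \<Rightarrow> 'a::ab_group_add \<Rightarrow> 'a" and V b +
  assumes bracket_self: "x \<in> V \<Longrightarrow> b x x = 0"
    and jacobi: "x \<in> V \<Longrightarrow> y \<in> V \<Longrightarrow> z \<in> V \<Longrightarrow> b x (b y z) + b y (b z x) + b z (b x y) = 0"
begin

lemma bracket_antisym: "x \<in> V \<Longrightarrow> y \<in> V \<Longrightarrow> b x y = - b y x"
  using bracket_self[of "x + y"] bracket_self[of x] bracket_self[of y]
  by (simp add: eq_neg_iff_add_eq_0 add.commute)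

lemma jacobi_left:
  assumes "x \<in> V" "y \<in> V" "z \<in> V"
  shows "b (b x y) z + b (b y z) x + b (b z x) y = 0"
proof -
  have "b (b x y) z + b (b y z) x + b (b z x) y = - (b z (b x y) + b x (b y z) + b y (b z x))"
    using assms bracket_antisym[of "b x y" z] bracket_antisym[of "b y z" x] bracket_antisym[of "b z x" y]
    by simp
  also have "\<dots> = 0" using jacobi[of z x y] assms by simp
  finally show ?thesis .
qed

lemma bracket_bracket_left: "x \<in> V \<Longrightarrow> y \<in> V \<Longrightarrow> z \<in> V \<Longrightarrow> b (b x y) z = b x (b y z) - b y (b x z)"
  using jacobi[of x y z] bracket_antisym[of z "b x y"] bracket_antisym[of z x]
  by (simp add: algebra_simps eq_neg_iff_add_eq_0)

end

lemma lie_alg_iff: "lie_alg s V b \<longleftrightarrow> lie_algebra s V b"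
  unfolding lie_alg_def lie_algebra_def bracket_space_def carrier_space_def bracket_space_axioms_def
    carrier_space_axioms_def lie_algebra_axioms_def
  by blast

section \<open>Lie tri-algebras\<close>

locale lie_tri_algebra = left: bracket_space s A l + right: bracket_space s A r + perp: bracket_space s A p
  for s :: "'k::field \<Rightarrow> 'a::ab_group_add \<Rightarrow> 'a" and A l r p +
  assumes right_eq: "a \<in> A \<Longrightarrow> b \<in> A \<Longrightarrow> r a b = - l b a"
    and perp_antisym: "a \<in> A \<Longrightarrow> b \<in> A \<Longrightarrow> p a b = - p b a"
    and left_jacobi: "x \<in> A \<Longrightarrow> y \<in> A \<Longrightarrow> z \<in> A \<Longrightarrow> l (l x y) z - l x (l y z) + l y (l x z) = 0"
    and left_perp: "x \<in> A \<Longrightarrow> y \<in> A \<Longrightarrow> z \<in> A \<Longrightarrow> l (p x y) z = l (l x y) z"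
    and perp_left_jacobi: "x \<in> A \<Longrightarrow> y \<in> A \<Longrightarrow> z \<in> A \<Longrightarrow> p (l x y) z - l x (p y z) - p (l x z) y = 0"
    and perp_jacobi: "x \<in> A \<Longrightarrow> y \<in> A \<Longrightarrow> z \<in> A \<Longrightarrow> p (p x y) z + p (p y z) x + p (p z x) y = 0"
begin

lemma left_left: "x \<in> A \<Longrightarrow> y \<in> A \<Longrightarrow> z \<in> A \<Longrightarrow> l (l x y) z = l x (l y z) - l y (l x z)"
  using left_jacobi[of x y z] by (simp add: eq_diff_eq diff_add_eq)

lemma perp_left: "x \<in> A \<Longrightarrow> y \<in> A \<Longrightarrow> z \<in> A \<Longrightarrow> p (l x y) z = l x (p y z) + p (l x z) y"
  using perp_left_jacobi[of x y z] by (simp add: diff_diff_eq)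

lemma left_derivation: "x \<in> A \<Longrightarrow> y \<in> A \<Longrightarrow> z \<in> A \<Longrightarrow> l x (p y z) = p (l x y) z + p y (l x z)"
  using perp_left[of x y z] perp_antisym[of "l x z" y] by simp

text \<open>Only here is the characteristic used: antisymmetry gives \<open>2 p a a = 0\<close>.\<close>
lemma perp_self: assumes "(2::'k) \<noteq> 0" "a \<in> A" shows "p a a = 0"
proof -
  have "s 2 (p a a) = p a a + p a a"
    using left.scale_left_distrib[of 1 1 "p a a"] by (simp add: one_add_one)
  also have "\<dots> = 0" using perp_antisym[OF assms(2) assms(2)] by (simp add: eq_neg_iff_add_eq_0)
  finally show ?thesis using assms(1) by simp
qed

lemma lie_algebra_perp: "(2::'k) \<noteq> 0 \<Longrightarrow> lie_algebra s A p"
proof (unfold_locales)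
  fix x y z assume "x \<in> A" "y \<in> A" "z \<in> A"
  then have "p x (p y z) + p y (p z x) + p z (p x y) = - (p (p y z) x + p (p z x) y + p (p x y) z)"
    using perp_antisym[of x "p y z"] perp_antisym[of y "p z x"] perp_antisym[of z "p x y"] by simp
  also have "\<dots> = 0" using perp_jacobi[of y z x] \<open>x \<in> A\<close> \<open>y \<in> A\<close> \<open>z \<in> A\<close> by simp
  finally show "p x (p y z) + p y (p z x) + p z (p x y) = 0" .
qed (simp add: perp_self)

end

lemma lie_tri_iff: "lie_tri s A l r p \<longleftrightarrow> lie_tri_algebra s A l r p"
proof
  assume "lie_tri s A l r p"
  then show "lie_tri_algebra s A l r p"
    unfolding lie_tri_def lie_tri_algebra_def lie_tri_algebra_axioms_def bracket_space_def
      bracket_space_axioms_def carrier_space_def carrier_space_axioms_def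
    by (elim conjE) (intro conjI allI impI; blast)
next
  assume "lie_tri_algebra s A l r p"
  then interpret lie_tri_algebra s A l r p .
  show "lie_tri s A l r p"
    unfolding lie_tri_def
    by (intro conjI ballI left.vector_space_axioms left.subspace_carrier left.closed right.closed
        perp.closed left.bilinear right.bilinear perp.bilinear right_eq perp_antisym left_jacobi
        left_perp perp_left_jacobi perp_jacobi)
qed

lemma (in bracket_space) bracket_space_subspace:
  "S \<subseteq> V \<Longrightarrow> subspace S \<Longrightarrow> closed_on S b \<Longrightarrow> bracket_space s S b"
  using bilinear by unfold_locales (auto simp: bilinear_on_def subset_iff)

lemma (in lie_algebra) lie_algebra_subalgebra:
  assumes "S \<subseteq> V" "subspace S" "closed_on S b"
  shows "lie_algebra s S b"
proof -
  interpret sub: bracket_space s S b by (rule bracket_space_subspace[OF assms])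
  show ?thesis using assms(1) by unfold_locales (auto intro: bracket_self jacobi)
qed

lemma (in lie_tri_algebra) lie_tri_algebra_subalgebra:
  assumes "S \<subseteq> A" "left.subspace S" "closed_on S l" "closed_on S r" "closed_on S p"
  shows "lie_tri_algebra s S l r p"
proof -
  interpret sl: bracket_space s S l by (rule left.bracket_space_subspace[OF assms(1,2,3)])
  interpret sr: bracket_space s S r by (rule right.bracket_space_subspace[OF assms(1,2,4)])
  interpret sp: bracket_space s S p by (rule perp.bracket_space_subspace[OF assms(1,2,5)])
  show ?thesis using assms(1)
    by unfold_locales (meson subsetD right_eq perp_antisym left_jacobi left_perp perp_left_jacobi perp_jacobi)+
qed

lemma lie_hom_id: "lie_hom s A b s A b id"
  by (auto simp: lie_hom_def lin_on_def)

lemma tri_hom_id: "tri_hom s A l r p s A l r p id"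
  by (auto simp: tri_hom_def lin_on_def)

lemma lie_hom_comp:
  "lie_hom s1 A b1 s2 B b2 f \<Longrightarrow> lie_hom s2 B b2 s3 C b3 g \<Longrightarrow> lie_hom s1 A b1 s3 C b3 (g \<circ> f)"
  by (auto simp: lie_hom_def lin_on_def)

lemma tri_hom_comp:
  "tri_hom s1 A l1 r1 p1 s2 B l2 r2 p2 f \<Longrightarrow> tri_hom s2 B l2 r2 p2 s3 C l3 r3 p3 g \<Longrightarrow>
   tri_hom s1 A l1 r1 p1 s3 C l3 r3 p3 (g \<circ> f)"
  by (auto simp: tri_hom_def lin_on_def)

lemma lie_hom_mono: "lie_hom s1 A b1 s2 B b2 f \<Longrightarrow> B \<subseteq> B' \<Longrightarrow> lie_hom s1 A b1 s2 B' b2 f"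
  by (auto simp: lie_hom_def)

lemma tri_hom_mono:
  "tri_hom s1 A l1 r1 p1 s2 B l2 r2 p2 f \<Longrightarrow> B \<subseteq> B' \<Longrightarrow> tri_hom s1 A l1 r1 p1 s2 B' l2 r2 p2 f"
  by (auto simp: tri_hom_def)

section \<open>Transport along linear embeddings\<close>

lemma subspace_linear_image:
  assumes "carrier_space s1 A" "vector_space s2" "lin_on s1 s2 A f"
  shows "module.subspace s2 (f ` A)"
proof -
  interpret dom: carrier_space s1 A by fact
  interpret cod: vector_space s2 by fact
  have add: "f (x + y) = f x + f y" and scale: "f (s1 c x) = s2 c (f x)" if "x \<in> A" "y \<in> A" for x y c
    using assms(3) that by (auto simp: lin_on_def)
  show ?thesis
    unfolding cod.subspace_def
  proof (intro conjI ballI allI)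
    show "0 \<in> f ` A"
      using add[of 0 0] by (metis add_cancel_right_right dom.zero_in_carrier image_eqI)
    show "x + y \<in> f ` A" if "x \<in> f ` A" "y \<in> f ` A" for x y
      using that add by (metis (no_types, lifting) dom.add_in_carrier image_iff)
    show "s2 c x \<in> f ` A" if "x \<in> f ` A" for x c
      using that scale by (metis dom.scale_in_carrier dom.zero_in_carrier image_iff)
  qed
qed

locale linear_embedding = dom: carrier_space s1 A + cod: vector_space s2
  for s1 :: "'k::field \<Rightarrow> 'a::ab_group_add \<Rightarrow> 'a" and A and s2 :: "'k \<Rightarrow> 'b::ab_group_add \<Rightarrow> 'b" +
  fixes E assumes linear: "lin_on s1 s2 A E" and inj: "inj_on E A"
begin

definition E_inv where "E_inv = inv_into A E"

definition transfer :: "('a \<Rightarrow> 'a \<Rightarrow> 'a) \<Rightarrow> 'b \<Rightarrow> 'b \<Rightarrow> 'b" where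
  "transfer b x y = E (b (E_inv x) (E_inv y))"

lemma E_add [simp]: "x \<in> A \<Longrightarrow> y \<in> A \<Longrightarrow> E (x + y) = E x + E y"
  using linear by (simp add: lin_on_def)

lemma E_scale [simp]: "x \<in> A \<Longrightarrow> E (s1 c x) = s2 c (E x)"
  using linear by (simp add: lin_on_def)

lemma E_zero [simp]: "E 0 = 0"
  using E_add[of 0 0] by simp

lemma E_diff [simp]: "x \<in> A \<Longrightarrow> y \<in> A \<Longrightarrow> E (x - y) = E x - E y"
  using E_add[of "x - y" y] by (simp add: eq_diff_eq)

lemma E_minus [simp]: "x \<in> A \<Longrightarrow> E (- x) = - E x"
  using E_diff[of 0 x] by simp

lemma E_inv_E [simp]: "x \<in> A \<Longrightarrow> E_inv (E x) = x"
  using inj by (simp add: E_inv_def)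

lemma E_E_inv [simp]: "y \<in> E ` A \<Longrightarrow> E (E_inv y) = y"
  by (simp add: E_inv_def f_inv_into_f)

lemma E_inv_in [simp, intro]: "y \<in> E ` A \<Longrightarrow> E_inv y \<in> A"
  by (simp add: E_inv_def inv_into_into)

lemma carrier_space_image: "carrier_space s2 (E ` A)"
  using subspace_linear_image[OF dom.carrier_space_axioms cod.vector_space_axioms linear]
  by unfold_locales

lemma E_inv_add [simp]: "x \<in> E ` A \<Longrightarrow> y \<in> E ` A \<Longrightarrow> E_inv (x + y) = E_inv x + E_inv y"
  by (auto simp del: E_add simp: E_add[symmetric])

lemma E_inv_scale [simp]: "x \<in> E ` A \<Longrightarrow> E_inv (s2 c x) = s1 c (E_inv x)"
  by (auto simp del: E_scale simp: E_scale[symmetric])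

lemma bracket_space_transfer:
  assumes "bracket_space s1 A b"
  shows "bracket_space s2 (E ` A) (transfer b)"
proof -
  interpret bracket_space s1 A b by fact
  interpret image: carrier_space s2 "E ` A" by (rule carrier_space_image)
  show ?thesis
    by unfold_locales (auto simp: bilinear_on_def closed_on_def transfer_def)
qed

lemma lie_algebra_transfer:
  assumes "lie_algebra s1 A b"
  shows "lie_algebra s2 (E ` A) (transfer b)"
proof -
  interpret lie_algebra s1 A b by fact
  interpret image: bracket_space s2 "E ` A" "transfer b"
    by (rule bracket_space_transfer) unfold_locales
  show ?thesis
  proof unfold_locales
    fix x y z assume "x \<in> E ` A" "y \<in> E ` A" "z \<in> E ` A"
    then show "transfer b x (transfer b y z) + transfer b y (transfer b z x) + transfer b z (transfer b x y) = 0"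
      using jacobi[of "E_inv x" "E_inv y" "E_inv z"]
      by (simp add: transfer_def del: E_add add: E_add[symmetric])
  qed (simp add: transfer_def bracket_self)
qed

lemma lie_tri_algebra_transfer:
  assumes "lie_tri_algebra s1 A l r p"
  shows "lie_tri_algebra s2 (E ` A) (transfer l) (transfer r) (transfer p)"
proof -
  interpret lie_tri_algebra s1 A l r p by fact
  interpret l: bracket_space s2 "E ` A" "transfer l" by (rule bracket_space_transfer) unfold_locales
  interpret r: bracket_space s2 "E ` A" "transfer r" by (rule bracket_space_transfer) unfold_locales
  interpret p: bracket_space s2 "E ` A" "transfer p" by (rule bracket_space_transfer) unfold_locales
  show ?thesis
  proof unfold_locales
    fix x y assume "x \<in> E ` A" "y \<in> E ` A"
    then show "transfer r x y = - transfer l y x" and "transfer p x y = - transfer p y x"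
      using perp_antisym[of "E_inv x" "E_inv y"] by (simp_all add: transfer_def right_eq)
  next
    fix x y z assume xyz: "x \<in> E ` A" "y \<in> E ` A" "z \<in> E ` A"
    show "transfer l (transfer l x y) z - transfer l x (transfer l y z) + transfer l y (transfer l x z) = 0"
      using xyz arg_cong[OF left_jacobi[of "E_inv x" "E_inv y" "E_inv z"], of E]
      by (simp add: transfer_def del: E_add E_diff add: E_add[symmetric] E_diff[symmetric])
    show "transfer l (transfer p x y) z = transfer l (transfer l x y) z"
      using xyz by (simp add: transfer_def left_perp)
    show "transfer p (transfer l x y) z - transfer l x (transfer p y z) - transfer p (transfer l x z) y = 0"
      using xyz arg_cong[OF perp_left_jacobi[of "E_inv x" "E_inv y" "E_inv z"], of E]
      by (simp add: transfer_def del: E_add E_diff add: E_add[symmetric] E_diff[symmetric])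
    show "transfer p (transfer p x y) z + transfer p (transfer p y z) x + transfer p (transfer p z x) y = 0"
      using xyz arg_cong[OF perp_jacobi[of "E_inv x" "E_inv y" "E_inv z"], of E]
      by (simp add: transfer_def del: E_add add: E_add[symmetric])
  qed
qed

lemma lie_hom_E: "bracket_space s1 A b \<Longrightarrow> lie_hom s1 A b s2 (E ` A) (transfer b) E"
  using linear by (auto simp: lie_hom_def transfer_def)

lemma lie_hom_E_inv: "bracket_space s1 A b \<Longrightarrow> lie_hom s2 (E ` A) (transfer b) s1 A b E_inv"
  by (auto simp: lie_hom_def lin_on_def transfer_def bracket_space.bracket_in_carrier)

lemma tri_hom_E_inv:
  "lie_tri_algebra s1 A l r p \<Longrightarrow>
   tri_hom s2 (E ` A) (transfer l) (transfer r) (transfer p) s1 A l r p E_inv"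
  by (auto simp: tri_hom_def lin_on_def transfer_def lie_tri_algebra_def bracket_space.bracket_in_carrier)

end

lemma vector_space_fun_scale: "vector_space (\<lambda>(c::'k::field) (f::'x \<Rightarrow> 'k) x. c * f x)"
  by unfold_locales (auto simp: algebra_simps plus_fun_def)

lemma exists_linear_embedding_into_functions:
  fixes s :: "'k::field \<Rightarrow> 'a::ab_group_add \<Rightarrow> 'a" and ev :: "'x \<Rightarrow> 'a"
  assumes "vector_space s" and V: "V \<subseteq> module.span s (ev ` X)"
  shows "\<exists>E :: 'a \<Rightarrow> 'x \<Rightarrow> 'k. lin_on s (\<lambda>c f x. c * f x) V E \<and> inj_on E V"
proof -
  interpret vector_space s by fact
  obtain B where B: "B \<subseteq> ev ` X" "independent B" "ev ` X \<subseteq> span B"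
    using maximal_independent_subset by blast
  have V_B: "V \<subseteq> span B" using V span_minimal[OF B(3)] by auto
  define g where "g = inv_into X ev"
  \<comment> \<open>coordinates with respect to a basis B, indexed through a choice of preimages in X\<close>
  define E where "E v = (\<lambda>x. if x \<in> g ` B then representation B v (ev x) else 0)" for v
  have E_g: "E v (g b) = representation B v b" if "b \<in> B" for b v
    using that B(1) by (auto simp: E_def g_def f_inv_into_f)
  have "lin_on s (\<lambda>c f x. c * f x) V E"
    unfolding lin_on_def
  proof safe
    fix x y assume "x \<in> V" "y \<in> V"
    then have "x \<in> span B" "y \<in> span B" using V_B by auto
    with B(2) show "E (x + y) = E x + E y"
      by (auto simp: E_def plus_fun_def representation_add)
  next
    fix c x assume "x \<in> V"
    then have "x \<in> span B" using V_B by auto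
    with B(2) show "E (s c x) = (\<lambda>y. c * E x y)"
      by (auto simp: E_def representation_scale)
  qed
  moreover have "inj_on E V"
  proof (rule inj_onI)
    fix v w assume v: "v \<in> V" and w: "w \<in> V" and eq: "E v = E w"
    have "representation B v b = representation B w b" for b
      using E_g[of b v] E_g[of b w] eq representation_ne_zero by (cases "b \<in> B") metis+
    then show "v = w"
      using sum_nonzero_representation_eq[OF B(2), of v] sum_nonzero_representation_eq[OF B(2), of w]
        v w V_B by auto
  qed
  ultimately show ?thesis by blast
qed

lemma linear_embedding_into_functions:
  fixes ev :: "'x \<Rightarrow> 'a::ab_group_add"
  assumes "carrier_space s A" "A \<subseteq> module.span s (ev ` X)"
  obtains E :: "'a \<Rightarrow> 'x \<Rightarrow> 'k::field" where "linear_embedding s A (\<lambda>c f x. c * f x) E"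
proof -
  interpret carrier_space s A by fact
  obtain E :: "'a \<Rightarrow> 'x \<Rightarrow> 'k" where "lin_on s (\<lambda>c f x. c * f x) A E" "inj_on E A"
    using exists_linear_embedding_into_functions[OF vector_space_axioms assms(2)] by blast
  then have "linear_embedding s A (\<lambda>c f x. c * f x) E"
    by (intro linear_embedding.intro linear_embedding_axioms.intro assms(1) vector_space_fun_scale)
  then show thesis by (rule that)
qed

lemma tri_univ_into_hom_exists:
  assumes "tri_univ_into sL L bL sU U l r p i sA" "lie_tri_algebra sA A l' r' p'"
    "lie_hom sL L bL sA A p' f"
  shows "\<exists>g. tri_hom sU U l r p sA A l' r' p' g \<and> (\<forall>x\<in>L. g (i x) = f x)"
  using assms unfolding tri_univ_into_def lie_tri_iff by blast

lemma tri_univ_into_hom_unique: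
  assumes "tri_univ_into sL L bL sU U l r p i sA" "lie_tri_algebra sA A l' r' p'"
    "lie_hom sL L bL sA A p' f"
    "tri_hom sU U l r p sA A l' r' p' g" "\<And>x. x \<in> L \<Longrightarrow> g (i x) = f x"
    "tri_hom sU U l r p sA A l' r' p' h" "\<And>x. x \<in> L \<Longrightarrow> h (i x) = f x" "u \<in> U"
  shows "g u = h u"
  using assms unfolding tri_univ_into_def lie_tri_iff by blast

lemma tri_univ_into_spanned:
  fixes ev :: "'x \<Rightarrow> 'c::ab_group_add" and sA :: "'k::field \<Rightarrow> 'c \<Rightarrow> 'c"
  assumes univ: "tri_univ_into sL L bL sU U l r p i (\<lambda>c (g :: 'x \<Rightarrow> 'k) x. c * g x)"
    and A: "lie_tri_algebra sA A l' r' p'" and f: "lie_hom sL L bL sA A p' f"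
    and span: "A \<subseteq> module.span sA (ev ` X)"
  shows "\<exists>g. tri_hom sU U l r p sA A l' r' p' g \<and> (\<forall>x\<in>L. g (i x) = f x)"
proof -
  interpret lie_tri_algebra sA A l' r' p' by fact
  obtain E :: "'c \<Rightarrow> 'x \<Rightarrow> 'k" where "linear_embedding sA A (\<lambda>c f x. c * f x) E"
    using linear_embedding_into_functions[OF left.carrier_space_axioms span] .
  then interpret linear_embedding sA A "\<lambda>c f x. c * f x" E .
  obtain g where g: "tri_hom sU U l r p (\<lambda>c f x. c * f x) (E ` A) (transfer l') (transfer r') (transfer p') g"
    "\<forall>x\<in>L. g (i x) = (E \<circ> f) x"
    using tri_univ_into_hom_exists[OF univ lie_tri_algebra_transfer[OF A]
        lie_hom_comp[OF f lie_hom_E[OF perp.bracket_space_axioms]]] by blast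
  have "tri_hom sU U l r p sA A l' r' p' (E_inv \<circ> g)"
    by (rule tri_hom_comp[OF g(1) tri_hom_E_inv[OF A]])
  moreover have "\<forall>x\<in>L. (E_inv \<circ> g) (i x) = f x"
    using g(2) f by (simp add: lie_hom_def)
  ultimately show ?thesis by blast
qed

lemma coprod_into_hom_exists:
  assumes "coprod_into sL L bL sF F bF j1 j2 sM" "lie_algebra sM M bM"
    "lie_hom sL L bL sM M bM g1" "lie_hom sL L bL sM M bM g2"
  shows "\<exists>h. lie_hom sF F bF sM M bM h \<and> (\<forall>x\<in>L. h (j1 x) = g1 x \<and> h (j2 x) = g2 x)"
  using assms unfolding coprod_into_def lie_alg_iff by blast

lemma coprod_into_hom_unique:
  assumes "coprod_into sL L bL sF F bF j1 j2 sM" "lie_algebra sM M bM"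
    "lie_hom sL L bL sM M bM g1" "lie_hom sL L bL sM M bM g2"
    "lie_hom sF F bF sM M bM h" "\<And>x. x \<in> L \<Longrightarrow> h (j1 x) = g1 x \<and> h (j2 x) = g2 x"
    "lie_hom sF F bF sM M bM h'" "\<And>x. x \<in> L \<Longrightarrow> h' (j1 x) = g1 x \<and> h' (j2 x) = g2 x" "u \<in> F"
  shows "h u = h' u"
  using assms unfolding coprod_into_def lie_alg_iff by blast

lemma coprod_into_spanned:
  fixes ev :: "'x \<Rightarrow> 'c::ab_group_add" and sM :: "'k::field \<Rightarrow> 'c \<Rightarrow> 'c"
  assumes coprod: "coprod_into sL L bL sF F bF j1 j2 (\<lambda>c (g :: 'x \<Rightarrow> 'k) x. c * g x)"
    and M: "lie_algebra sM M bM" and g1: "lie_hom sL L bL sM M bM g1" and g2: "lie_hom sL L bL sM M bM g2"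
    and span: "M \<subseteq> module.span sM (ev ` X)"
  shows "\<exists>h. lie_hom sF F bF sM M bM h \<and> (\<forall>x\<in>L. h (j1 x) = g1 x \<and> h (j2 x) = g2 x)"
proof -
  interpret lie_algebra sM M bM by fact
  obtain E :: "'c \<Rightarrow> 'x \<Rightarrow> 'k" where "linear_embedding sM M (\<lambda>c f x. c * f x) E"
    using linear_embedding_into_functions[OF carrier_space_axioms span] .
  then interpret linear_embedding sM M "\<lambda>c f x. c * f x" E .
  obtain h where h: "lie_hom sF F bF (\<lambda>c f x. c * f x) (E ` M) (transfer bM) h"
    "\<forall>x\<in>L. h (j1 x) = (E \<circ> g1) x \<and> h (j2 x) = (E \<circ> g2) x"
    using coprod_into_hom_exists[OF coprod lie_algebra_transfer[OF M]
        lie_hom_comp[OF g1 lie_hom_E] lie_hom_comp[OF g2 lie_hom_E]] bracket_space_axioms by blast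
  have "lie_hom sF F bF sM M bM (E_inv \<circ> h)"
    by (rule lie_hom_comp[OF h(1) lie_hom_E_inv[OF bracket_space_axioms]])
  moreover have "\<forall>x\<in>L. (E_inv \<circ> h) (j1 x) = g1 x \<and> (E_inv \<circ> h) (j2 x) = g2 x"
    using h(2) g1 g2 by (simp add: lie_hom_def)
  ultimately show ?thesis by blast
qed

section \<open>Semidirect products\<close>

locale lie_action = A: lie_algebra sA A bA + L: lie_algebra sL L bL
  for sA :: "'k::field \<Rightarrow> 'a::ab_group_add \<Rightarrow> 'a" and A bA
    and sL :: "'k \<Rightarrow> 'l::ab_group_add \<Rightarrow> 'l" and L bL +
  fixes D :: "'l \<Rightarrow> 'a \<Rightarrow> 'a"
  assumes action_in: "b \<in> L \<Longrightarrow> a \<in> A \<Longrightarrow> D b a \<in> A"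
    and action_add_left: "b \<in> L \<Longrightarrow> b' \<in> L \<Longrightarrow> a \<in> A \<Longrightarrow> D (b + b') a = D b a + D b' a"
    and action_scale_left: "b \<in> L \<Longrightarrow> a \<in> A \<Longrightarrow> D (sL c b) a = sA c (D b a)"
    and action_add_right: "b \<in> L \<Longrightarrow> a \<in> A \<Longrightarrow> a' \<in> A \<Longrightarrow> D b (a + a') = D b a + D b a'"
    and action_scale_right: "b \<in> L \<Longrightarrow> a \<in> A \<Longrightarrow> D b (sA c a) = sA c (D b a)"
    and action_derivation: "b \<in> L \<Longrightarrow> a \<in> A \<Longrightarrow> a' \<in> A \<Longrightarrow> D b (bA a a') = bA (D b a) a' + bA a (D b a')"
    and action_bracket: "b \<in> L \<Longrightarrow> b' \<in> L \<Longrightarrow> a \<in> A \<Longrightarrow> D (bL b b') a = D b (D b' a) - D b' (D b a)"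
begin

definition sdp_scale :: "'k \<Rightarrow> 'a \<times> 'l \<Rightarrow> 'a \<times> 'l" where
  "sdp_scale c x = (sA c (fst x), sL c (snd x))"

definition sdp_bracket :: "'a \<times> 'l \<Rightarrow> 'a \<times> 'l \<Rightarrow> 'a \<times> 'l" where
  "sdp_bracket x y = (bA (fst x) (fst y) + D (snd x) (fst y) - D (snd y) (fst x), bL (snd x) (snd y))"

lemma action_diff_right: "b \<in> L \<Longrightarrow> a \<in> A \<Longrightarrow> a' \<in> A \<Longrightarrow> D b (a - a') = D b a - D b a'"
  using action_add_right[of b "a - a'" a'] by (simp add: eq_diff_eq)

lemma vector_space_sdp: "vector_space sdp_scale"
  by unfold_locales (auto simp: sdp_scale_def A.scale_right_distrib A.scale_left_distrib
      L.scale_right_distrib L.scale_left_distrib)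

lemma lie_algebra_semidirect_product: "lie_algebra sdp_scale (A \<times> L) sdp_bracket"
proof (intro lie_algebra.intro lie_algebra_axioms.intro bracket_space.intro bracket_space_axioms.intro
    carrier_space.intro carrier_space_axioms.intro vector_space_sdp)
  show "module.subspace sdp_scale (A \<times> L)"
    unfolding module.subspace_def[OF vector_space_sdp[unfolded module_iff_vector_space[symmetric]]]
    by (auto simp: sdp_scale_def zero_prod_def)
  show "bilinear_on sdp_scale (A \<times> L) sdp_bracket"
    unfolding bilinear_on_def
    by (auto simp: sdp_bracket_def sdp_scale_def action_in action_add_left action_add_right
        action_scale_left action_scale_right algebra_simps)
  show "closed_on (A \<times> L) sdp_bracket"
    unfolding closed_on_def by (auto simp: sdp_bracket_def action_in)
  show "sdp_bracket x x = 0" if "x \<in> A \<times> L" for x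
    using that by (auto simp: sdp_bracket_def A.bracket_self L.bracket_self zero_prod_def)
  fix x y z assume "x \<in> A \<times> L" "y \<in> A \<times> L" "z \<in> A \<times> L"
  then obtain a b a' b' a'' b'' where xyz: "x = (a, b)" "y = (a', b')" "z = (a'', b'')"
    and a: "a \<in> A" "a' \<in> A" "a'' \<in> A" and b: "b \<in> L" "b' \<in> L" "b'' \<in> L" by auto
  have expand: "fst (sdp_bracket (a, b) (sdp_bracket (a', b') (a'', b''))) =
      bA a (bA a' a'') + bA a (D b' a'') - bA a (D b'' a') + bA (D b a') a'' + bA a' (D b a'')
      + D b (D b' a'') - D b (D b'' a') - D b' (D b'' a) + D b'' (D b' a)"
    if "a \<in> A" "a' \<in> A" "a'' \<in> A" "b \<in> L" "b' \<in> L" "b'' \<in> L" for a b a' b' a'' b''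
    using that by (simp add: sdp_bracket_def action_in action_add_right action_diff_right
        action_derivation action_bracket algebra_simps)
  have anti: "bA (D b' a'') a = - bA a (D b' a'')" "bA (D b a') a'' = - bA a'' (D b a')"
    "bA (D b'' a) a' = - bA a' (D b'' a)"
    using a b by (simp_all only: A.bracket_antisym[OF action_in] a)
  have "fst (sdp_bracket x (sdp_bracket y z) + sdp_bracket y (sdp_bracket z x) + sdp_bracket z (sdp_bracket x y)) = 0"
    unfolding xyz fst_add expand[OF a b] expand[OF a(2,3,1) b(2,3,1)] expand[OF a(3,1,2) b(3,1,2)] anti
    using A.jacobi[OF a] by (simp add: algebra_simps)
  moreover have "snd (sdp_bracket x (sdp_bracket y z) + sdp_bracket y (sdp_bracket z x) + sdp_bracket z (sdp_bracket x y)) = 0"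
    unfolding xyz using L.jacobi[OF b] by (simp add: sdp_bracket_def)
  ultimately show "sdp_bracket x (sdp_bracket y z) + sdp_bracket y (sdp_bracket z x) + sdp_bracket z (sdp_bracket x y) = 0"
    by (simp add: prod_eq_iff)
qed

sublocale semidirect: lie_algebra sdp_scale "A \<times> L" sdp_bracket
  by (rule lie_algebra_semidirect_product)

lemma lie_hom_snd: "lie_hom sdp_scale (A \<times> L) sdp_bracket sL L bL snd"
  by (auto simp: lie_hom_def lin_on_def sdp_scale_def sdp_bracket_def)

end

section \<open>The enveloping tri-algebra and the free product\<close>

text \<open>
  The universal properties are only assumed for targets in a few fixed types, one of them
  the functions on labelled trees. A target spanned by evaluations of such trees embeds into
  that type by its coordinates along a basis of evaluated trees; this is how both universal
  properties are applied to \<open>I\<close> and to \<open>U \<rtimes> L\<close>.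
\<close>

fun eval_tree :: "('x \<Rightarrow> 'a) \<Rightarrow> ('x \<Rightarrow> 'a) \<Rightarrow> (nat \<Rightarrow> 'a \<Rightarrow> 'a \<Rightarrow> 'a) \<Rightarrow> ('x + 'x) btree \<Rightarrow> 'a" where
  "eval_tree f g op (Leaf (Inl x)) = f x"
| "eval_tree f g op (Leaf (Inr x)) = g x"
| "eval_tree f g op (Node n t1 t2) = op n (eval_tree f g op t1) (eval_tree f g op t2)"

fun tree_over :: "'x set \<Rightarrow> ('x + 'x) btree \<Rightarrow> bool" where
  "tree_over X (Leaf (Inl x)) = (x \<in> X)"
| "tree_over X (Leaf (Inr x)) = (x \<in> X)"
| "tree_over X (Node n t1 t2) = (tree_over X t1 \<and> tree_over X t2)"

locale envelope_free_product =
  fixes sL :: "'k::field \<Rightarrow> 'l::ab_group_add \<Rightarrow> 'l"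
    and L :: "'l set" and bL :: "'l \<Rightarrow> 'l \<Rightarrow> 'l"
    and sU :: "'k \<Rightarrow> 'u::ab_group_add \<Rightarrow> 'u" and U :: "'u set"
    and l r p :: "'u \<Rightarrow> 'u \<Rightarrow> 'u" and i :: "'l \<Rightarrow> 'u"
    and sF :: "'k \<Rightarrow> 'f::ab_group_add \<Rightarrow> 'f" and F :: "'f set" and bF :: "'f \<Rightarrow> 'f \<Rightarrow> 'f"
    and jdot j :: "'l \<Rightarrow> 'f"
  assumes char_not_2: "(2::'k) \<noteq> 0"
    and envelope: "is_univ_env_tri sL L bL sU U l r p i"
    and free_product: "is_free_product sL L bL sF F bF jdot j"
begin

sublocale L: lie_algebra sL L bL
  using envelope by (simp add: is_univ_env_tri_def lie_alg_iff)

sublocale U: lie_tri_algebra sU U l r p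
  using envelope by (simp add: is_univ_env_tri_def lie_tri_iff)

sublocale F: lie_algebra sF F bF
  using free_product by (simp add: is_free_product_def lie_alg_iff)

lemma i_hom: "lie_hom sL L bL sU U p i"
  using envelope by (simp add: is_univ_env_tri_def)

lemma jdot_hom: "lie_hom sL L bL sF F bF jdot"
  using free_product by (simp add: is_free_product_def)

lemma j_hom: "lie_hom sL L bL sF F bF j"
  using free_product by (simp add: is_free_product_def)

lemma i_in [simp, intro]: "x \<in> L \<Longrightarrow> i x \<in> U"
  using i_hom by (simp add: lie_hom_def)

lemma i_add [simp]: "x \<in> L \<Longrightarrow> y \<in> L \<Longrightarrow> i (x + y) = i x + i y"
  using i_hom by (simp add: lie_hom_def lin_on_def)

lemma i_scale [simp]: "x \<in> L \<Longrightarrow> i (sL c x) = sU c (i x)"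
  using i_hom by (simp add: lie_hom_def lin_on_def)

lemma i_bracket [simp]: "x \<in> L \<Longrightarrow> y \<in> L \<Longrightarrow> i (bL x y) = p (i x) (i y)"
  using i_hom by (simp add: lie_hom_def)

lemma i_zero [simp]: "i 0 = 0"
  using i_add[of 0 0] by simp

lemma jdot_in [simp, intro]: "x \<in> L \<Longrightarrow> jdot x \<in> F"
  using jdot_hom by (simp add: lie_hom_def)

lemma j_in [simp, intro]: "x \<in> L \<Longrightarrow> j x \<in> F"
  using j_hom by (simp add: lie_hom_def)

lemma envelope_hom_exists:
  fixes ev :: "('l + 'l) btree \<Rightarrow> 'c::ab_group_add" and sA :: "'k \<Rightarrow> 'c \<Rightarrow> 'c"
  assumes "lie_tri_algebra sA A l' r' p'" "lie_hom sL L bL sA A p' f" "A \<subseteq> module.span sA (ev ` X)"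
  shows "\<exists>g. tri_hom sU U l r p sA A l' r' p' g \<and> (\<forall>x\<in>L. g (i x) = f x)"
proof -
  have "tri_univ_into sL L bL sU U l r p i (\<lambda>c (g :: ('l, 'k) big) x. c * g x)"
    using envelope by (simp add: is_univ_env_tri_def)
  from tri_univ_into_spanned[OF this assms] show ?thesis .
qed

lemma envelope_endo_eq_id:
  assumes g: "tri_hom sU U l r p sU U l r p g" and g_i: "\<And>x. x \<in> L \<Longrightarrow> g (i x) = i x" and "u \<in> U"
  shows "g u = u"
proof -
  have "tri_univ_into sL L bL sU U l r p i sU"
    using envelope by (simp add: is_univ_env_tri_def)
  from tri_univ_into_hom_unique[OF this U.lie_tri_algebra_axioms i_hom g g_i tri_hom_id _ \<open>u \<in> U\<close>]
  show ?thesis by simp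
qed

lemma envelope_generated:
  assumes T: "T \<subseteq> U" "U.left.subspace T" "closed_on T l" "closed_on T r" "closed_on T p" "i ` L \<subseteq> T"
  shows "U \<subseteq> T"
proof
  fix u assume "u \<in> U"
  have univ: "tri_univ_into sL L bL sU U l r p i sU"
    using envelope by (simp add: is_univ_env_tri_def)
  have i_T: "lie_hom sL L bL sU T p i" using i_hom T(6) unfolding lie_hom_def by blast
  obtain g where g: "tri_hom sU U l r p sU T l r p g" "\<forall>x\<in>L. g (i x) = i x"
    using tri_univ_into_hom_exists[OF univ U.lie_tri_algebra_subalgebra[OF T(1-5)] i_T] by blast
  have "g u = u"
    by (rule envelope_endo_eq_id[OF tri_hom_mono[OF g(1) T(1)]]) (use g(2) \<open>u \<in> U\<close> in auto)
  moreover have "g u \<in> T" using g(1) \<open>u \<in> U\<close> by (simp add: tri_hom_def)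
  ultimately show "u \<in> T" by simp
qed

lemma free_hom_exists:
  fixes ev :: "('l + 'l) btree \<Rightarrow> 'c::ab_group_add" and sM :: "'k \<Rightarrow> 'c \<Rightarrow> 'c"
  assumes "lie_algebra sM M bM" "lie_hom sL L bL sM M bM g1" "lie_hom sL L bL sM M bM g2"
    "M \<subseteq> module.span sM (ev ` X)"
  shows "\<exists>h. lie_hom sF F bF sM M bM h \<and> (\<forall>x\<in>L. h (jdot x) = g1 x \<and> h (j x) = g2 x)"
proof -
  have "coprod_into sL L bL sF F bF jdot j (\<lambda>c (g :: ('l, 'k) big) x. c * g x)"
    using free_product by (simp add: is_free_product_def)
  from coprod_into_spanned[OF this assms] show ?thesis .
qed

lemma free_endo_exists:
  assumes "lie_hom sL L bL sF F bF g1" "lie_hom sL L bL sF F bF g2"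
  shows "\<exists>h. lie_hom sF F bF sF F bF h \<and> (\<forall>x\<in>L. h (jdot x) = g1 x \<and> h (j x) = g2 x)"
proof -
  have "coprod_into sL L bL sF F bF jdot j sF"
    using free_product by (simp add: is_free_product_def)
  from coprod_into_hom_exists[OF this F.lie_algebra_axioms assms] show ?thesis .
qed

lemma free_endo_unique:
  assumes h: "lie_hom sF F bF sF F bF h" and h': "lie_hom sF F bF sF F bF h'"
    and eq: "\<And>x. x \<in> L \<Longrightarrow> h (jdot x) = h' (jdot x) \<and> h (j x) = h' (j x)" and "u \<in> F"
  shows "h u = h' u"
proof -
  have coprod: "coprod_into sL L bL sF F bF jdot j sF"
    using free_product by (simp add: is_free_product_def)
  show ?thesis
  proof (rule coprod_into_hom_unique[OF coprod F.lie_algebra_axioms lie_hom_comp[OF jdot_hom h]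
        lie_hom_comp[OF j_hom h] h _ h' _ \<open>u \<in> F\<close>])
    fix x assume "x \<in> L"
    show "h (jdot x) = (h \<circ> jdot) x \<and> h (j x) = (h \<circ> j) x" by simp
    show "h' (jdot x) = (h \<circ> jdot) x \<and> h' (j x) = (h \<circ> j) x" using eq[OF \<open>x \<in> L\<close>] by simp
  qed
qed

lemma free_generated:
  assumes S: "S \<subseteq> F" "F.subspace S" "closed_on S bF" "jdot ` L \<subseteq> S" "j ` L \<subseteq> S"
  shows "F \<subseteq> S"
proof
  fix u assume "u \<in> F"
  have coprod: "coprod_into sL L bL sF F bF jdot j sF"
    using free_product by (simp add: is_free_product_def)
  have "lie_hom sL L bL sF S bF jdot" "lie_hom sL L bL sF S bF j"
    using jdot_hom j_hom S(4,5) unfolding lie_hom_def by blast+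
  then obtain h where h: "lie_hom sF F bF sF S bF h" "\<forall>x\<in>L. h (jdot x) = jdot x \<and> h (j x) = j x"
    using coprod_into_hom_exists[OF coprod F.lie_algebra_subalgebra[OF S(1-3)]] by blast
  have "h u = id u"
    by (rule free_endo_unique[OF lie_hom_mono[OF h(1) S(1)] lie_hom_id]) (use h(2) \<open>u \<in> F\<close> in auto)
  moreover have "h u \<in> S" using h(1) \<open>u \<in> F\<close> by (simp add: lie_hom_def)
  ultimately show "u \<in> S" by simp
qed

definition trees :: "('l + 'l) btree set" where
  "trees = {t. tree_over L t}"

definition free_monomial :: "('l + 'l) btree \<Rightarrow> 'f" where
  "free_monomial = eval_tree jdot j (\<lambda>_. bF)"

definition env_monomial :: "('l + 'l) btree \<Rightarrow> 'u" where
  "env_monomial = eval_tree i i (\<lambda>n. if n = 0 then l else if n = 1 then r else p)"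

lemma free_monomial_in: "t \<in> trees \<Longrightarrow> free_monomial t \<in> F"
  unfolding free_monomial_def trees_def
proof (induction t)
  case (Leaf x) then show ?case by (cases x) auto
qed auto

lemma env_monomial_in: "t \<in> trees \<Longrightarrow> env_monomial t \<in> U"
  unfolding env_monomial_def trees_def
proof (induction t)
  case (Leaf x) then show ?case by (cases x) auto
qed auto

lemma F_spanned: "F \<subseteq> F.span (free_monomial ` trees)"
proof (rule free_generated)
  have G: "free_monomial ` trees \<subseteq> F" using free_monomial_in by auto
  show "F.span (free_monomial ` trees) \<subseteq> F" by (rule F.span_minimal[OF G F.subspace_carrier])
  show "closed_on (F.span (free_monomial ` trees)) bF"
    unfolding closed_on_def
  proof (intro ballI, rule F.bracket_span_closed[OF G])
    fix x y assume "x \<in> free_monomial ` trees" "y \<in> free_monomial ` trees"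
    then obtain t1 t2 where "t1 \<in> trees" "t2 \<in> trees" "x = free_monomial t1" "y = free_monomial t2" by auto
    then have "bF x y = free_monomial (Node 0 t1 t2)" "Node 0 t1 t2 \<in> trees"
      by (auto simp: free_monomial_def trees_def)
    then show "bF x y \<in> F.span (free_monomial ` trees)" by (auto intro: F.span_base)
  qed
  have "jdot x = free_monomial (Leaf (Inl x))" "j x = free_monomial (Leaf (Inr x))" for x
    by (simp_all add: free_monomial_def)
  then show "jdot ` L \<subseteq> F.span (free_monomial ` trees)" "j ` L \<subseteq> F.span (free_monomial ` trees)"
    by (auto intro!: F.span_base simp: trees_def)
qed simp

lemma U_spanned: "U \<subseteq> U.left.span (env_monomial ` trees)"
proof (rule envelope_generated)
  have G: "env_monomial ` trees \<subseteq> U" using env_monomial_in by auto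
  show "U.left.span (env_monomial ` trees) \<subseteq> U" by (rule U.left.span_minimal[OF G U.left.subspace_carrier])
  have node: "op x y \<in> U.left.span (env_monomial ` trees)"
    if xy: "x \<in> env_monomial ` trees" "y \<in> env_monomial ` trees"
      and op: "op = (if n = 0 then l else if n = 1 then r else p)"
    for x y op and n :: nat
  proof -
    obtain t1 t2 where "t1 \<in> trees" "t2 \<in> trees" "x = env_monomial t1" "y = env_monomial t2"
      using xy by auto
    then have "op x y = env_monomial (Node n t1 t2)" "Node n t1 t2 \<in> trees"
      using op by (auto simp: env_monomial_def trees_def)
    then show ?thesis by (auto intro: U.left.span_base)
  qed
  show "closed_on (U.left.span (env_monomial ` trees)) l"
    unfolding closed_on_def by (intro ballI, rule U.left.bracket_span_closed[OF G], rule node[of _ _ l 0]) simp_all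
  show "closed_on (U.left.span (env_monomial ` trees)) r"
    unfolding closed_on_def by (intro ballI, rule U.right.bracket_span_closed[OF G], rule node[of _ _ r 1]) simp_all
  show "closed_on (U.left.span (env_monomial ` trees)) p"
    unfolding closed_on_def by (intro ballI, rule U.perp.bracket_span_closed[OF G], rule node[of _ _ p 2]) simp_all
  have "i x = env_monomial (Leaf (Inl x))" for x by (simp add: env_monomial_def)
  then show "i ` L \<subseteq> U.left.span (env_monomial ` trees)"
    by (auto intro!: U.left.span_base simp: trees_def)
qed simp


definition collapse :: "'f \<Rightarrow> 'f" where
  "collapse = (SOME h. lie_hom sF F bF sF F bF h \<and> (\<forall>x\<in>L. h (jdot x) = j x \<and> h (j x) = j x))"

lemma collapse_hom: "lie_hom sF F bF sF F bF collapse"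
  and collapse_jdot [simp]: "x \<in> L \<Longrightarrow> collapse (jdot x) = j x"
  and collapse_j [simp]: "x \<in> L \<Longrightarrow> collapse (j x) = j x"
proof -
  have "lie_hom sF F bF sF F bF collapse \<and> (\<forall>x\<in>L. collapse (jdot x) = j x \<and> collapse (j x) = j x)"
    unfolding collapse_def by (rule someI_ex[OF free_endo_exists[OF j_hom j_hom]])
  then show "lie_hom sF F bF sF F bF collapse" "x \<in> L \<Longrightarrow> collapse (jdot x) = j x"
    "x \<in> L \<Longrightarrow> collapse (j x) = j x" by auto
qed

lemma collapse_in [simp, intro]: "x \<in> F \<Longrightarrow> collapse x \<in> F"
  using collapse_hom by (simp add: lie_hom_def)

lemma collapse_add [simp]: "x \<in> F \<Longrightarrow> y \<in> F \<Longrightarrow> collapse (x + y) = collapse x + collapse y"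
  using collapse_hom by (simp add: lie_hom_def lin_on_def)

lemma collapse_scale [simp]: "x \<in> F \<Longrightarrow> collapse (sF c x) = sF c (collapse x)"
  using collapse_hom by (simp add: lie_hom_def lin_on_def)

lemma collapse_bracket [simp]: "x \<in> F \<Longrightarrow> y \<in> F \<Longrightarrow> collapse (bF x y) = bF (collapse x) (collapse y)"
  using collapse_hom by (simp add: lie_hom_def)

lemma collapse_zero [simp]: "collapse 0 = 0"
  using collapse_add[of 0 0] by simp

lemma collapse_idem [simp]: "x \<in> F \<Longrightarrow> collapse (collapse x) = collapse x"
  using free_endo_unique[OF lie_hom_comp[OF collapse_hom collapse_hom] collapse_hom, of x] by simp

definition dot_ideal :: "'f set" where
  "dot_ideal = lie_ideal_gen sF F bF (jdot ` L)"

lemma dot_ideal_least: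
  "F.subspace J \<Longrightarrow> J \<subseteq> F \<Longrightarrow> jdot ` L \<subseteq> J \<Longrightarrow> (\<forall>x\<in>F. \<forall>y\<in>J. bF x y \<in> J) \<Longrightarrow> dot_ideal \<subseteq> J"
  unfolding dot_ideal_def lie_ideal_gen_def by blast

lemma dot_ideal_subset: "dot_ideal \<subseteq> F"
  by (rule dot_ideal_least) (auto simp: F.subspace_carrier)

lemma dot_ideal_in_F [simp, intro]: "x \<in> dot_ideal \<Longrightarrow> x \<in> F"
  using dot_ideal_subset by blast

lemma jdot_in_dot_ideal [simp, intro]: "x \<in> L \<Longrightarrow> jdot x \<in> dot_ideal"
  unfolding dot_ideal_def lie_ideal_gen_def by blast

lemma dot_ideal_bracket [simp, intro]: "x \<in> F \<Longrightarrow> y \<in> dot_ideal \<Longrightarrow> bF x y \<in> dot_ideal"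
  unfolding dot_ideal_def lie_ideal_gen_def by blast

lemma dot_ideal_subspace: "F.subspace dot_ideal"
  unfolding dot_ideal_def lie_ideal_gen_def by (rule F.subspace_Inter) blast

definition ideal_left :: "'f \<Rightarrow> 'f \<Rightarrow> 'f" where
  "ideal_left x y = bF (collapse x) y"

definition ideal_right :: "'f \<Rightarrow> 'f \<Rightarrow> 'f" where
  "ideal_right x y = - bF (collapse y) x"

lemma lie_tri_algebra_dot_ideal: "lie_tri_algebra sF dot_ideal ideal_left ideal_right bF"
proof -
  interpret I: carrier_space sF dot_ideal by unfold_locales (rule dot_ideal_subspace)
  interpret I_left: bracket_space sF dot_ideal ideal_left
    by unfold_locales (auto simp: bilinear_on_def closed_on_def ideal_left_def)
  interpret I_right: bracket_space sF dot_ideal ideal_right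
    by unfold_locales (auto simp: bilinear_on_def closed_on_def ideal_right_def)
  interpret I_perp: bracket_space sF dot_ideal bF
    by unfold_locales (auto simp: bilinear_on_def closed_on_def)
  show ?thesis
  proof unfold_locales
    fix x y z assume "x \<in> dot_ideal" "y \<in> dot_ideal" "z \<in> dot_ideal"
    then have xyz: "x \<in> F" "y \<in> F" "z \<in> F" by auto
    show "ideal_right x y = - ideal_left y x" by (simp add: ideal_left_def ideal_right_def)
    show "bF x y = - bF y x" by (rule F.bracket_antisym[OF xyz(1,2)])
    show "ideal_left (ideal_left x y) z - ideal_left x (ideal_left y z) + ideal_left y (ideal_left x z) = 0"
      using xyz by (simp add: ideal_left_def F.bracket_bracket_left)
    show "ideal_left (bF x y) z = ideal_left (ideal_left x y) z"
      using xyz by (simp add: ideal_left_def)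
    have "bF (collapse x) (bF y z) = bF (bF (collapse x) y) z + bF y (bF (collapse x) z)"
      using xyz by (simp add: F.bracket_bracket_left)
    also have "\<dots> = bF (bF (collapse x) y) z - bF (bF (collapse x) z) y"
      using xyz F.bracket_antisym[of y "bF (collapse x) z"] by simp
    finally show "bF (ideal_left x y) z - ideal_left x (bF y z) - bF (ideal_left x z) y = 0"
      by (simp add: ideal_left_def)
    show "bF (bF x y) z + bF (bF y z) x + bF (bF z x) y = 0"
      using xyz by (rule F.jacobi_left)
  qed
qed

definition to_ideal :: "'u \<Rightarrow> 'f" where
  "to_ideal = (SOME g. tri_hom sU U l r p sF dot_ideal ideal_left ideal_right bF g \<and> (\<forall>x\<in>L. g (i x) = jdot x))"

lemma to_ideal_hom: "tri_hom sU U l r p sF dot_ideal ideal_left ideal_right bF to_ideal"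
  and to_ideal_i [simp]: "x \<in> L \<Longrightarrow> to_ideal (i x) = jdot x"
proof -
  have "lie_hom sL L bL sF dot_ideal bF jdot"
    using jdot_hom by (auto simp: lie_hom_def)
  moreover have "dot_ideal \<subseteq> F.span (free_monomial ` trees)"
    using dot_ideal_subset F_spanned by blast
  ultimately have "\<exists>g. tri_hom sU U l r p sF dot_ideal ideal_left ideal_right bF g \<and> (\<forall>x\<in>L. g (i x) = jdot x)"
    by (rule envelope_hom_exists[OF lie_tri_algebra_dot_ideal])
  then have "tri_hom sU U l r p sF dot_ideal ideal_left ideal_right bF to_ideal \<and> (\<forall>x\<in>L. to_ideal (i x) = jdot x)"
    unfolding to_ideal_def by (rule someI_ex)
  then show "tri_hom sU U l r p sF dot_ideal ideal_left ideal_right bF to_ideal"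
    "x \<in> L \<Longrightarrow> to_ideal (i x) = jdot x" by auto
qed

lemma to_ideal_in [simp, intro]: "u \<in> U \<Longrightarrow> to_ideal u \<in> dot_ideal"
  using to_ideal_hom by (simp add: tri_hom_def)

lemma to_ideal_add [simp]: "u \<in> U \<Longrightarrow> v \<in> U \<Longrightarrow> to_ideal (u + v) = to_ideal u + to_ideal v"
  using to_ideal_hom by (simp add: tri_hom_def lin_on_def)

lemma to_ideal_scale [simp]: "u \<in> U \<Longrightarrow> to_ideal (sU c u) = sF c (to_ideal u)"
  using to_ideal_hom by (simp add: tri_hom_def lin_on_def)

lemma to_ideal_left: "u \<in> U \<Longrightarrow> v \<in> U \<Longrightarrow> to_ideal (l u v) = bF (collapse (to_ideal u)) (to_ideal v)"
  using to_ideal_hom by (simp add: tri_hom_def ideal_left_def)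

lemma to_ideal_right: "u \<in> U \<Longrightarrow> v \<in> U \<Longrightarrow> to_ideal (r u v) = - to_ideal (l v u)"
  using to_ideal_hom by (simp add: tri_hom_def ideal_left_def ideal_right_def)

lemma to_ideal_perp: "u \<in> U \<Longrightarrow> v \<in> U \<Longrightarrow> to_ideal (p u v) = bF (to_ideal u) (to_ideal v)"
  using to_ideal_hom by (simp add: tri_hom_def)

lemma subspace_to_ideal_image: "F.subspace (to_ideal ` U)"
  using to_ideal_hom U.left.carrier_space_axioms F.vector_space_axioms
  by (intro subspace_linear_image) (auto simp: tri_hom_def)

text \<open>The image of \<open>to_ideal\<close> is an ideal: bracketing with a generator \<open>jdot x\<close> or \<open>j x\<close> is
  the image of \<open>p (i x)\<close> or \<open>l (i x)\<close>.\<close>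
lemma bracket_to_ideal_image: "g \<in> F \<Longrightarrow> u \<in> U \<Longrightarrow> bF g (to_ideal u) \<in> to_ideal ` U"
proof -
  let ?S = "{g \<in> F. \<forall>u\<in>U. bF g (to_ideal u) \<in> to_ideal ` U}"
  have W: "F.subspace (to_ideal ` U)" by (rule subspace_to_ideal_image)
  have "F \<subseteq> ?S"
  proof (rule free_generated)
    show "F.subspace ?S"
      unfolding F.subspace_def
      using F.subspace_0[OF W] F.subspace_add[OF W] F.subspace_scale[OF W] by auto
    show "closed_on ?S bF"
      unfolding closed_on_def
    proof (intro ballI CollectI conjI)
      fix x y assume x: "x \<in> ?S" and y: "y \<in> ?S"
      show "bF x y \<in> F" using x y by auto
      fix u assume u: "u \<in> U"
      obtain v w where vw: "v \<in> U" "bF y (to_ideal u) = to_ideal v" "w \<in> U" "bF x (to_ideal u) = to_ideal w"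
        using x y u by blast
      have "bF (bF x y) (to_ideal u) = bF x (to_ideal v) - bF y (to_ideal w)"
        using x y u vw by (simp add: F.bracket_bracket_left)
      then show "bF (bF x y) (to_ideal u) \<in> to_ideal ` U"
        using x y vw F.subspace_diff[OF W] by auto
    qed
    have "bF (jdot x) (to_ideal u) = to_ideal (p (i x) u)" "bF (j x) (to_ideal u) = to_ideal (l (i x) u)"
      if "x \<in> L" "u \<in> U" for x u
      using that by (simp_all add: to_ideal_perp to_ideal_left)
    then show "jdot ` L \<subseteq> ?S" "j ` L \<subseteq> ?S" by auto
  qed auto
  then show "g \<in> F \<Longrightarrow> u \<in> U \<Longrightarrow> bF g (to_ideal u) \<in> to_ideal ` U" by blast
qed

lemma to_ideal_image: "to_ideal ` U = dot_ideal"
proof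
  show "to_ideal ` U \<subseteq> dot_ideal" by auto
  show "dot_ideal \<subseteq> to_ideal ` U"
  proof (rule dot_ideal_least[OF subspace_to_ideal_image])
    show "jdot ` L \<subseteq> to_ideal ` U" by (auto intro!: image_eqI[of _ to_ideal "i _"])
  qed (auto intro: bracket_to_ideal_image)
qed


section \<open>Injectivity\<close>

sublocale action: lie_action sU U p sL L bL "\<lambda>b. l (i b)"
proof (intro lie_action.intro lie_action_axioms.intro U.lie_algebra_perp[OF char_not_2] L.lie_algebra_axioms)
  fix b b' a a' c assume "b \<in> L" "b' \<in> L" "a \<in> U" "a' \<in> U"
  then show "l (i b) a \<in> U" "l (i (b + b')) a = l (i b) a + l (i b') a"
    "l (i (sL c b)) a = sU c (l (i b) a)" "l (i b) (a + a') = l (i b) a + l (i b) a'"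
    "l (i b) (sU c a) = sU c (l (i b) a)" "l (i b) (p a a') = p (l (i b) a) a' + p a (l (i b) a')"
    "l (i (bL b b')) a = l (i b) (l (i b') a) - l (i b') (l (i b) a)"
    by (simp_all add: U.left_derivation U.left_perp U.left_left)
qed

definition sdp_monomial :: "('l + 'l) btree \<Rightarrow> 'u \<times> 'l" where
  "sdp_monomial t = (case t of Leaf (Inr x) \<Rightarrow> (0, x) | _ \<Rightarrow> (env_monomial t, 0))"

lemma env_monomial_as_sdp_monomial:
  assumes "t \<in> trees" obtains t' where "t' \<in> trees" "sdp_monomial t' = (env_monomial t, 0)"
proof (cases t)
  case (Leaf x)
  show thesis
  proof (cases x)
    case (Inl y) then show thesis using that assms Leaf by (auto simp: sdp_monomial_def)
  next
    case (Inr y)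
    then show thesis using that[of "Leaf (Inl y)"] assms Leaf
      by (auto simp: sdp_monomial_def env_monomial_def trees_def)
  qed
next
  case Node then show thesis using that assms by (auto simp: sdp_monomial_def)
qed

lemma sdp_spanned: "U \<times> L \<subseteq> action.semidirect.span (sdp_monomial ` trees)"
proof clarify
  fix u b assume u: "u \<in> U" and b: "b \<in> L"
  have "(0, b) = sdp_monomial (Leaf (Inr b))" by (simp add: sdp_monomial_def)
  then have b_span: "(0, b) \<in> action.semidirect.span (sdp_monomial ` trees)"
    using b by (auto intro!: action.semidirect.span_base simp: trees_def)
  have "u \<in> U.left.span (env_monomial ` trees)" using u U_spanned by blast
  then have u_span: "(u, 0) \<in> action.semidirect.span (sdp_monomial ` trees)"
  proof (induction rule: U.left.span_induct_alt)
    case base then show ?case using action.semidirect.span_zero by (simp add: zero_prod_def)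
  next
    case (step c z w)
    then obtain t where "t \<in> trees" "z = env_monomial t" by auto
    then obtain t' where "t' \<in> trees" "sdp_monomial t' = (z, 0)"
      by (auto elim: env_monomial_as_sdp_monomial)
    then have "(z, 0) \<in> action.semidirect.span (sdp_monomial ` trees)"
      by (metis action.semidirect.span_base image_eqI)
    moreover have "(sU c z + w, 0 :: 'l) = action.sdp_scale c (z, 0) + (w, 0)"
      by (simp add: action.sdp_scale_def)
    ultimately show ?case
      using step(2) by (auto intro!: action.semidirect.span_add action.semidirect.span_scale)
  qed
  have "(u, b) = (u, 0) + (0, b)" by simp
  then show "(u, b) \<in> action.semidirect.span (sdp_monomial ` trees)"
    using b_span u_span by (metis action.semidirect.span_add)
qed

definition to_sdp :: "'f \<Rightarrow> 'u \<times> 'l" where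
  "to_sdp = (SOME h. lie_hom sF F bF action.sdp_scale (U \<times> L) action.sdp_bracket h \<and>
                     (\<forall>x\<in>L. h (jdot x) = (i x, 0) \<and> h (j x) = (0, x)))"

lemma to_sdp_hom: "lie_hom sF F bF action.sdp_scale (U \<times> L) action.sdp_bracket to_sdp"
  and to_sdp_jdot [simp]: "x \<in> L \<Longrightarrow> to_sdp (jdot x) = (i x, 0)"
  and to_sdp_j [simp]: "x \<in> L \<Longrightarrow> to_sdp (j x) = (0, x)"
proof -
  have "lie_hom sL L bL action.sdp_scale (U \<times> L) action.sdp_bracket (\<lambda>x. (i x, 0))"
    "lie_hom sL L bL action.sdp_scale (U \<times> L) action.sdp_bracket (\<lambda>x. (0, x))"
    by (auto simp: lie_hom_def lin_on_def action.sdp_scale_def action.sdp_bracket_def)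
  from free_hom_exists[OF action.lie_algebra_semidirect_product this sdp_spanned]
  have "lie_hom sF F bF action.sdp_scale (U \<times> L) action.sdp_bracket to_sdp \<and>
      (\<forall>x\<in>L. to_sdp (jdot x) = (i x, 0) \<and> to_sdp (j x) = (0, x))"
    unfolding to_sdp_def by (rule someI_ex)
  then show "lie_hom sF F bF action.sdp_scale (U \<times> L) action.sdp_bracket to_sdp"
    "x \<in> L \<Longrightarrow> to_sdp (jdot x) = (i x, 0)" "x \<in> L \<Longrightarrow> to_sdp (j x) = (0, x)" by auto
qed

lemma to_sdp_in: "g \<in> F \<Longrightarrow> to_sdp g \<in> U \<times> L"
  using to_sdp_hom by (simp add: lie_hom_def)

lemma fst_to_sdp_in [simp, intro]: "g \<in> F \<Longrightarrow> fst (to_sdp g) \<in> U"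
  using to_sdp_in by (auto simp: mem_Times_iff)

lemma snd_to_sdp_in [simp, intro]: "g \<in> F \<Longrightarrow> snd (to_sdp g) \<in> L"
  using to_sdp_in by (auto simp: mem_Times_iff)

lemma to_sdp_add [simp]: "g \<in> F \<Longrightarrow> h \<in> F \<Longrightarrow> to_sdp (g + h) = to_sdp g + to_sdp h"
  using to_sdp_hom by (simp add: lie_hom_def lin_on_def)

lemma to_sdp_scale [simp]: "g \<in> F \<Longrightarrow> to_sdp (sF c g) = action.sdp_scale c (to_sdp g)"
  using to_sdp_hom by (simp add: lie_hom_def lin_on_def)

lemma to_sdp_bracket: "g \<in> F \<Longrightarrow> h \<in> F \<Longrightarrow> to_sdp (bF g h) = action.sdp_bracket (to_sdp g) (to_sdp h)"
  using to_sdp_hom by (simp add: lie_hom_def)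

lemma to_sdp_zero [simp]: "to_sdp 0 = 0"
  using to_sdp_add[of 0 0] by simp

lemma to_sdp_minus: "g \<in> F \<Longrightarrow> to_sdp (- g) = - to_sdp g"
  using to_sdp_add[of g "- g"] by (simp add: eq_neg_iff_add_eq_0 add.commute)

lemma snd_to_sdp_dot_ideal: "g \<in> dot_ideal \<Longrightarrow> snd (to_sdp g) = 0"
proof -
  have "dot_ideal \<subseteq> {g \<in> F. snd (to_sdp g) = 0}"
  proof (rule dot_ideal_least)
    show "F.subspace {g \<in> F. snd (to_sdp g) = 0}"
      unfolding F.subspace_def by (auto simp: action.sdp_scale_def)
  qed (auto simp: to_sdp_bracket action.sdp_bracket_def)
  then show "g \<in> dot_ideal \<Longrightarrow> snd (to_sdp g) = 0" by blast
qed

lemma fst_to_sdp_collapse: "g \<in> F \<Longrightarrow> fst (to_sdp (collapse g)) = 0"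
proof -
  have "F \<subseteq> {g \<in> F. fst (to_sdp (collapse g)) = 0}"
  proof (rule free_generated)
    show "F.subspace {g \<in> F. fst (to_sdp (collapse g)) = 0}"
      unfolding F.subspace_def by (auto simp: action.sdp_scale_def)
    show "closed_on {g \<in> F. fst (to_sdp (collapse g)) = 0} bF"
      unfolding closed_on_def by (auto simp: to_sdp_bracket action.sdp_bracket_def)
  qed auto
  then show "g \<in> F \<Longrightarrow> fst (to_sdp (collapse g)) = 0" by blast
qed


definition project :: "'f \<Rightarrow> 'l" where
  "project g = snd (to_sdp (collapse g))"

lemma project_hom: "lie_hom sF F bF sL L bL project"
proof -
  have "project = snd \<circ> to_sdp \<circ> collapse" by (rule ext) (simp add: project_def)
  then show ?thesis
    by (simp only:) (intro lie_hom_comp[OF collapse_hom] lie_hom_comp[OF to_sdp_hom] action.lie_hom_snd)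
qed

lemma project_in [simp, intro]: "g \<in> F \<Longrightarrow> project g \<in> L"
  using project_hom by (simp add: lie_hom_def)

lemma project_add [simp]: "g \<in> F \<Longrightarrow> h \<in> F \<Longrightarrow> project (g + h) = project g + project h"
  using project_hom by (simp add: lie_hom_def lin_on_def)

lemma project_scale [simp]: "g \<in> F \<Longrightarrow> project (sF a g) = sL a (project g)"
  using project_hom by (simp add: lie_hom_def lin_on_def)

lemma project_bracket [simp]: "g \<in> F \<Longrightarrow> h \<in> F \<Longrightarrow> project (bF g h) = bL (project g) (project h)"
  using project_hom by (simp add: lie_hom_def)

lemma project_zero [simp]: "project 0 = 0"
  using project_add[of 0 0] by simp

definition sdp_act :: "'u \<times> 'l \<Rightarrow> 'u \<Rightarrow> 'u" where
  "sdp_act m c = l (fst m) c + l (i (snd m)) c"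

lemma sdp_act_add:
  "m \<in> U \<times> L \<Longrightarrow> m' \<in> U \<times> L \<Longrightarrow> c \<in> U \<Longrightarrow> sdp_act (m + m') c = sdp_act m c + sdp_act m' c"
  by (auto simp: sdp_act_def algebra_simps)

lemma sdp_act_scale: "m \<in> U \<times> L \<Longrightarrow> c \<in> U \<Longrightarrow> sdp_act (action.sdp_scale a m) c = sU a (sdp_act m c)"
  by (auto simp: sdp_act_def action.sdp_scale_def U.left.scale_right_distrib)

lemma sdp_act_bracket:
  assumes "m \<in> U \<times> L" "m' \<in> U \<times> L" "c \<in> U"
  shows "sdp_act (action.sdp_bracket m m') c = sdp_act m (sdp_act m' c) - sdp_act m' (sdp_act m c)"
proof -
  obtain a b a' b' where m: "m = (a, b)" "m' = (a', b')" and ab: "a \<in> U" "b \<in> L" "a' \<in> U" "b' \<in> L"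
    using assms(1,2) by auto
  show ?thesis
    unfolding m using ab assms(3)
    by (simp add: sdp_act_def action.sdp_bracket_def U.left_perp U.left_left algebra_simps)
qed

text \<open>Both sides are Lie homomorphisms of \<open>F\<close> into the operators on \<open>U\<close> that agree on the
  generators: for \<open>jdot x\<close> and \<open>j x\<close> both are \<open>l (i x)\<close>.\<close>
lemma sdp_act_to_sdp: "g \<in> F \<Longrightarrow> c \<in> U \<Longrightarrow> sdp_act (to_sdp g) c = l (i (project g)) c"
proof -
  let ?S = "{g \<in> F. \<forall>c\<in>U. sdp_act (to_sdp g) c = l (i (project g)) c}"
  have "F \<subseteq> ?S"
  proof (rule free_generated)
    show "F.subspace ?S"
      unfolding F.subspace_def
      by (simp add: sdp_act_def[of 0] sdp_act_add sdp_act_scale to_sdp_in U.left.scale_right_distrib)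
    show "closed_on ?S bF"
      unfolding closed_on_def
    proof (intro ballI CollectI conjI)
      fix g h assume g: "g \<in> ?S" and h: "h \<in> ?S"
      then show "bF g h \<in> F" by auto
      fix c assume c: "c \<in> U"
      have "sdp_act (to_sdp (bF g h)) c
          = sdp_act (to_sdp g) (sdp_act (to_sdp h) c) - sdp_act (to_sdp h) (sdp_act (to_sdp g) c)"
        using g h c by (simp add: to_sdp_bracket sdp_act_bracket to_sdp_in)
      also have "\<dots> = l (i (project g)) (l (i (project h)) c) - l (i (project h)) (l (i (project g)) c)"
        using g h c by (simp add: sdp_act_def)
      also have "\<dots> = l (i (project (bF g h))) c"
        using g h c by (simp add: U.left_perp U.left_left)
      finally show "sdp_act (to_sdp (bF g h)) c = l (i (project (bF g h))) c" .
    qed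
    show "jdot ` L \<subseteq> ?S" "j ` L \<subseteq> ?S"
      by (auto simp: sdp_act_def project_def)
  qed auto
  then show "g \<in> F \<Longrightarrow> c \<in> U \<Longrightarrow> sdp_act (to_sdp g) c = l (i (project g)) c" by blast
qed

definition retract :: "'u \<Rightarrow> 'u" where
  "retract u = fst (to_sdp (to_ideal u))"

lemma retract_in [simp, intro]: "u \<in> U \<Longrightarrow> retract u \<in> U"
  by (simp add: retract_def)

lemma to_sdp_to_ideal: "u \<in> U \<Longrightarrow> to_sdp (to_ideal u) = (retract u, 0)"
  using snd_to_sdp_dot_ideal[of "to_ideal u"] by (simp add: retract_def prod_eq_iff)

lemma to_sdp_collapse: "g \<in> F \<Longrightarrow> to_sdp (collapse g) = (0, project g)"
  using fst_to_sdp_collapse[of g] by (simp add: project_def prod_eq_iff)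

lemma retract_left: "u \<in> U \<Longrightarrow> v \<in> U \<Longrightarrow> retract (l u v) = l (retract u) (retract v)"
proof -
  assume u: "u \<in> U" and v: "v \<in> U"
  have "retract (l u v) = fst (action.sdp_bracket (0, project (to_ideal u)) (retract v, 0))"
    using u v by (simp add: retract_def[of "l u v"] to_ideal_left to_sdp_bracket to_sdp_collapse to_sdp_to_ideal)
  also have "\<dots> = l (i (project (to_ideal u))) (retract v)"
    using u v by (simp add: action.sdp_bracket_def)
  also have "\<dots> = l (retract u) (retract v)"
    using sdp_act_to_sdp[of "to_ideal u" "retract v"] u v by (simp add: sdp_act_def to_sdp_to_ideal)
  finally show ?thesis .
qed

lemma retract_hom: "tri_hom sU U l r p sU U l r p retract"
  unfolding tri_hom_def lin_on_def
proof (intro conjI ballI allI)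
  fix u v assume u: "u \<in> U" and v: "v \<in> U"
  show "retract u \<in> U" using u by simp
  show "retract (u + v) = retract u + retract v" using u v by (simp add: retract_def)
  show "retract (l u v) = l (retract u) (retract v)" using u v by (rule retract_left)
  have "retract (r u v) = - retract (l v u)"
    using u v by (simp add: retract_def to_ideal_right to_sdp_minus)
  also have "\<dots> = - l (retract v) (retract u)" using u v by (simp add: retract_left)
  also have "\<dots> = r (retract u) (retract v)" using u v U.right_eq[of "retract u" "retract v"] by simp
  finally show "retract (r u v) = r (retract u) (retract v)" .
  show "retract (p u v) = p (retract u) (retract v)"
    using u v
    by (simp add: retract_def[of "p u v"] to_ideal_perp to_sdp_bracket to_sdp_to_ideal action.sdp_bracket_def)
next
  fix c u assume "u \<in> U"
  then show "retract (sU c u) = sU c (retract u)"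
    by (simp add: retract_def action.sdp_scale_def)
qed

lemma to_ideal_inj: "inj_on to_ideal U"
proof (rule inj_on_inverseI)
  fix u assume "u \<in> U"
  then show "fst (to_sdp (to_ideal u)) = u"
    using envelope_endo_eq_id[OF retract_hom] by (simp add: retract_def)
qed

end

theorem theorem5p1:
  fixes sL :: "'k::field \<Rightarrow> 'l::ab_group_add \<Rightarrow> 'l"
    and L :: "'l set" and bL :: "'l \<Rightarrow> 'l \<Rightarrow> 'l"
    and sU :: "'k \<Rightarrow> 'u::ab_group_add \<Rightarrow> 'u" and U :: "'u set"
    and l r p :: "'u \<Rightarrow> 'u \<Rightarrow> 'u" and i :: "'l \<Rightarrow> 'u"
    and sF :: "'k \<Rightarrow> 'f::ab_group_add \<Rightarrow> 'f" and F :: "'f set" and bF :: "'f \<Rightarrow> 'f \<Rightarrow> 'f"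
    and jdot j :: "'l \<Rightarrow> 'f"
  assumes "(2::'k) \<noteq> 0"
    and "lie_alg sL L bL"
    and "is_univ_env_tri sL L bL sU U l r p i"
    and "is_free_product sL L bL sF F bF jdot j"
  shows "\<exists>\<phi>. lin_on sU sF U \<phi> \<and> bij_betw \<phi> U (lie_ideal_gen sF F bF (jdot ` L))"
proof -
  interpret envelope_free_product sL L bL sU U l r p i sF F bF jdot j
    using assms(1,3,4) by unfold_locales
  have "lin_on sU sF U to_ideal"
    using to_ideal_hom by (simp add: tri_hom_def)
  moreover have "bij_betw to_ideal U dot_ideal"
    using to_ideal_inj to_ideal_image by (simp add: bij_betw_def)
  ultimately show ?thesis
    unfolding dot_ideal_def by blast
qed

end
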